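(* Let $\mathcal M\otimes\mathcal A_\varphi$ be the product of a labelled MDP $\mathcal M=(S,\mathit{Act},P,\mu)$ with labelling $L$ and a deterministic Streett automaton $\mathcal A_\varphi=(Q,2^{AP},\delta,q_0,\mathit{Acc})$, with state space $S\times Q$. Let $\pi$ be a stationary policy on the product, $\gamma\in(0,1)$, $(A,B)\in\mathit{Acc}$ (so $A,B\subseteq Q$), and $I\subseteq S\times Q$ measurable. Write $U^\otimes:=(S\times B)\cup\mathrm{Abs}_\pi\big((S\times(A\cup B))^c\big)$ (complement taken in $S\times Q$). Assume: (1) $I$ is absorbing under $\pi$ in the product and $\mu^\otimes(I)=1$; (2) $\Pr_\pi(\tau_{U^\otimes}<\infty\mid S_0=x)=1$ for all $x\in I$; (3) there is $\bar H<\infty$ with $\mathbb{E}_\pi[\tau_{U^\otimes}\mid S_0=x]\le\bar H$ for all $x\in((S\times A)\setminus(S\times B))\cap I$; (4) the reward is $r^\otimes((s,q),a,(s',q'))=\mathbf 1_{\{(s,q)\in U^\otimes\}}$. Then $W(s,q):=C-V^\pi(s,q)$ on $I$, with $C:=\frac1{1-\gamma}$, is a Streett supermartingale for $(S\times A,S\times B)$ on $\mathcal M\otimes\mathcal A_\varphi$ with supporting invariant $I$.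
   Context: An MDP $(S,\mathit{Act},P,\mu)$ has state/action spaces finite/countable or Borel subsets of Euclidean space, a stochastic kernel $P$ on $S$ given $S\times\mathit{Act}$ and initial distribution $\mu$. A labelled MDP additionally has a finite set $AP$ of atomic propositions and a labelling $L:S\to2^{AP}$. A deterministic Streett automaton is $(Q,2^{AP},\delta,q_0,\mathit{Acc})$ with finite $Q$, $\delta:Q\times2^{AP}\to Q$, $q_0\in Q$, and $\mathit{Acc}$ a finite set of pairs $(A_i,B_i)$, $A_i,B_i\subseteq Q$. The product MDP $\mathcal M\otimes\mathcal A_\varphi$ has state space $S\times Q$, actions $\mathit{Act}$, transitions from $(s,q)$ under $a$ to $(s',\delta(q,L(s)))$ with $s'\sim P(\cdot\mid s,a)$, and initial distribution $\mu^\otimes=\mu\otimes\delta_{q_0}$. A stationary policy $\pi$ is a stochastic kernel on actions given states; $\Pr_\pi(\cdot\mid S_0=x)$, $\mathbb{E}_\pi[\cdot\mid S_0=x]$ refer to the product process started at $x$. Value function: $V^\pi(x)=\mathbb{E}_\pi[\sum_{t\ge0}\gamma^t r^\otimes(S_t,A_t,S_{t+1})\mid S_0=x]$. A measurable set $X$ is absorbing if $\Pr_\pi(S_1\in X\mid S_0=x)=1$ for all $x\in X$; $\mathrm{Abs}_\pi(X):=\{x:\Pr_\pi(\forall t\ge0:S_t\in X\mid S_0=x)=1\}$; $\tau_U:=\inf\{t\ge0:S_t\in U\}$. Streett supermartingale (on a state space $\mathcal X$ with initial distribution $\nu$): for measurable $A',B',I\subseteq\mathcal X$, $W:I\to[0,\infty)$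 is a Streett supermartingale for $(A',B')$ with supporting invariant $I$ if $\nu(I)=1$, $\Pr_\pi(S_1\in I\mid S_0=x)=1$ for $x\in I$, there is $\varepsilon>0$ with $\mathbb{E}_\pi[W(S_1)\mid S_0=x]\le W(x)-\varepsilon$ for $x\in(A'\setminus B')\cap I$, and $\mathbb{E}_\pi[W(S_1)\mid S_0=x]\le W(x)$ for $x\in I\setminus(A'\cup B')$. *)

theory Defs
  imports "HOL-Probability.Probability"
begin

definition prod_space :: "'s measure \<Rightarrow> 'q set \<Rightarrow> ('s \<times> 'q) measure" where
  "prod_space Ms Q = Ms \<Otimes>\<^sub>M count_space Q"

definition prod_kernel ::
  "'s measure \<Rightarrow> 'q set \<Rightarrow> ('s \<Rightarrow> 'a \<Rightarrow> 's measure) \<Rightarrow> ('s \<Rightarrow> 'ap set)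
    \<Rightarrow> ('q \<Rightarrow> 'ap set \<Rightarrow> 'q) \<Rightarrow> ('s \<times> 'q) \<Rightarrow> 'a \<Rightarrow> ('s \<times> 'q) measure" where
  "prod_kernel Ms Q P L \<delta> x a =
     distr (P (fst x) a) (prod_space Ms Q) (\<lambda>s'. (s', \<delta> (snd x) (L (fst x))))"

definition prod_init :: "'s measure \<Rightarrow> 's measure \<Rightarrow> 'q set \<Rightarrow> 'q \<Rightarrow> ('s \<times> 'q) measure" where
  "prod_init Ms \<mu> Q q0 = distr \<mu> (prod_space Ms Q) (\<lambda>s. (s, q0))"

text \<open>Trajectories are sequences omega with omega t = (S_t, A_t).\<close>
definition step_kernel ::
  "'x measure \<Rightarrow> 'a measure \<Rightarrow> ('x \<Rightarrow> 'a \<Rightarrow> 'x measure) \<Rightarrow> ('x \<Rightarrow> 'a measure)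
    \<Rightarrow> 'x \<Rightarrow> nat \<Rightarrow> (nat \<Rightarrow> 'x \<times> 'a) \<Rightarrow> ('x \<times> 'a) measure" where
  "step_kernel Mx Ma K \<pi> x i h =
     (if i = 0 then return Mx x else K (fst (h (i - 1))) (snd (h (i - 1))))
       \<bind> (\<lambda>y. distr (\<pi> y) (Mx \<Otimes>\<^sub>M Ma) (\<lambda>a. (y, a)))"

definition path_measure ::
  "'x measure \<Rightarrow> 'a measure \<Rightarrow> ('x \<Rightarrow> 'a \<Rightarrow> 'x measure) \<Rightarrow> ('x \<Rightarrow> 'a measure)
    \<Rightarrow> 'x \<Rightarrow> (nat \<Rightarrow> 'x \<times> 'a) measure" where
  "path_measure Mx Ma K \<pi> x =
     projective_family.lim UNIV
       (Ionescu_Tulcea.CI (step_kernel Mx Ma K \<pi> x) (\<lambda>_. Mx \<Otimes>\<^sub>M Ma))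
       (\<lambda>_. Mx \<Otimes>\<^sub>M Ma)"

definition absorbing :: "('x \<Rightarrow> (nat \<Rightarrow> 'x \<times> 'a) measure) \<Rightarrow> 'x set \<Rightarrow> bool" where
  "absorbing Pr X \<longleftrightarrow>
     (\<forall>x\<in>X. measure (Pr x) {\<omega> \<in> space (Pr x). fst (\<omega> 1) \<in> X} = 1)"

definition Abs :: "'x measure \<Rightarrow> ('x \<Rightarrow> (nat \<Rightarrow> 'x \<times> 'a) measure) \<Rightarrow> 'x set \<Rightarrow> 'x set" where
  "Abs Mx Pr X =
     {x \<in> space Mx. measure (Pr x) {\<omega> \<in> space (Pr x). \<forall>t. fst (\<omega> t) \<in> X} = 1}"

definition hitting_time :: "'x set \<Rightarrow> (nat \<Rightarrow> 'x \<times> 'a) \<Rightarrow> enat" where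
  "hitting_time U \<omega> =
     (if \<exists>t. fst (\<omega> t) \<in> U then enat (LEAST t. fst (\<omega> t) \<in> U) else \<infinity>)"

definition value_fun ::
  "('x \<Rightarrow> (nat \<Rightarrow> 'x \<times> 'a) measure) \<Rightarrow> real \<Rightarrow> ('x \<Rightarrow> 'a \<Rightarrow> 'x \<Rightarrow> real) \<Rightarrow> 'x \<Rightarrow> real" where
  "value_fun Pr \<gamma> r x =
     (\<integral>\<omega>. (\<Sum>t. \<gamma> ^ t * r (fst (\<omega> t)) (snd (\<omega> t)) (fst (\<omega> (Suc t)))) \<partial>Pr x)"

text \<open>The expectation E_pi[W(S_1) | S_0 = x]
is required to exist (integrability) where it is used.\<close>
definition streett_supermartingale ::
  "'x measure \<Rightarrow> ('x \<Rightarrow> (nat \<Rightarrow> 'x \<times> 'a) measure) \<Rightarrow> 'x measure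
    \<Rightarrow> 'x set \<Rightarrow> 'x set \<Rightarrow> 'x set \<Rightarrow> ('x \<Rightarrow> real) \<Rightarrow> bool" where
  "streett_supermartingale Mx Pr \<nu> A' B' I W \<longleftrightarrow>
     A' \<in> sets Mx \<and> B' \<in> sets Mx \<and> I \<in> sets Mx \<and>
     (\<forall>x\<in>I. 0 \<le> W x) \<and>
     measure \<nu> I = 1 \<and>
     (\<forall>x\<in>I. measure (Pr x) {\<omega> \<in> space (Pr x). fst (\<omega> 1) \<in> I} = 1) \<and>
     (\<forall>x\<in>I - B'. integrable (Pr x) (\<lambda>\<omega>. W (fst (\<omega> 1)))) \<and>
     (\<exists>\<epsilon>>0. \<forall>x\<in>(A' - B') \<inter> I. (\<integral>\<omega>. W (fst (\<omega> 1)) \<partial>Pr x) \<le> W x - \<epsilon>) \<and>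
     (\<forall>x\<in>I - (A' \<union> B'). (\<integral>\<omega>. W (fst (\<omega> 1)) \<partial>Pr x) \<le> W x)"

end

theory Submission
  imports Defs
begin

(* With reward 1_U the value V x = E_x[sum_t gamma^t 1_U(S_t)] lies in [0, C], C = 1/(1 - gamma),
   and the Markov property of the path measure gives the Bellman equation
   V x = 1_U(x) + gamma E_x[V(S_1)].  Off U this reads E_x[V(S_1)] = V x / gamma, so W = C - V
   drops in expectation by (1 - gamma)/gamma V x >= 0.  States of A - B lie off U, because
   Abs(X) is contained in the set X of states outside A and B; and if E_x[tau_U] <= H there, then
   Markov's inequality gives Pr_x(tau_U > 2H) <= 1/2, hence V x >= gamma^ceil(2H) / 2, a uniform
   lower bound on the drop.  A state of U outside A and B lies in Abs(X), which is contained in U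
   and which the process almost surely never leaves; there the Bellman equation forces
   E_x[V(S_1)] = C, so E_x[W(S_1)] = 0 <= W x. *)

lemma prod_emb_initial_segment:
  fixes J :: "nat set"
  assumes "finite J" "X \<in> sets (PiM J M)"
  obtains n Y where "Y \<in> sets (PiM {0..<n} M)"
    "prod_emb UNIV M J X = prod_emb UNIV M {0..<n} Y"
proof -
  define n where "n = Suc (Max (insert 0 J))"
  have J: "J \<subseteq> {0..<n}" using assms(1) by (auto simp: n_def less_Suc_eq_le)
  show ?thesis
    by (rule that[of "prod_emb {0..<n} M J X"]) (use J assms in auto)
qed

lemma (in prob_space) abs_integral_le_bound:
  fixes f :: "_ \<Rightarrow> real"
  assumes "f \<in> borel_measurable M" "\<And>x. x \<in> space M \<Longrightarrow> \<bar>f x\<bar> \<le> B"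
  shows "\<bar>integral\<^sup>L M f\<bar> \<le> B"
proof -
  have "integrable M f"
    by (rule integrable_const_bound[where B=B]) (use assms in auto)
  then have "(\<integral>x. \<bar>f x\<bar> \<partial>M) \<le> B"
    using assms by (intro integral_le_const) auto
  then show ?thesis using integral_abs_bound[of M f] by linarith
qed

lemma (in prob_space) AE_eq_const_of_integral_ge:
  fixes f :: "_ \<Rightarrow> real"
  assumes f: "integrable M f" and le: "AE x in M. f x \<le> c" and ge: "c \<le> integral\<^sup>L M f"
  shows "AE x in M. f x = c"
proof -
  have nonneg: "AE x in M. 0 \<le> c - f x" using le by eventually_elim simp
  have "(\<integral>x. c - f x \<partial>M) = c - integral\<^sup>L M f"
    using f by (simp add: prob_space)
  with ge have "(\<integral>x. c - f x \<partial>M) \<le> 0" by simp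
  with integral_nonneg_AE[OF nonneg] have "(\<integral>x. c - f x \<partial>M) = 0" by linarith
  with integral_nonneg_eq_0_iff_AE[OF _ nonneg] f have "AE x in M. c - f x = 0" by simp
  then show ?thesis by eventually_elim simp
qed

section \<open>Markov chains generated by a stochastic kernel\<close>

locale kernel_chain =
  fixes E :: "'e measure" and K :: "'e \<Rightarrow> 'e measure"
  assumes K[measurable]: "K \<in> E \<rightarrow>\<^sub>M prob_algebra E"
begin

definition history_kernel :: "'e measure \<Rightarrow> nat \<Rightarrow> (nat \<Rightarrow> 'e) \<Rightarrow> 'e measure" where
  "history_kernel \<nu> i h = (if i = 0 then \<nu> else K (h (i - 1)))"

definition chain_law :: "'e measure \<Rightarrow> (nat \<Rightarrow> 'e) measure" where
  "chain_law \<nu> =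
     projective_family.lim UNIV (Ionescu_Tulcea.CI (history_kernel \<nu>) (\<lambda>_. E)) (\<lambda>_. E)"

definition extend_path :: "nat \<Rightarrow> (nat \<Rightarrow> 'e) \<Rightarrow> (nat \<Rightarrow> 'e) measure" where
  "extend_path n \<omega> = distr (K (\<omega> (n - 1))) (PiM {0..<Suc n} (\<lambda>_. E)) (fun_upd \<omega> n)"

text \<open>The law of the first n coordinates. It agrees with the measure C 0 n of the locale
  Ionescu_Tulcea, but is defined outside that locale so that it depends measurably on
  the initial law.\<close>
fun fdd :: "'e measure \<Rightarrow> nat \<Rightarrow> (nat \<Rightarrow> 'e) measure" where
  "fdd \<nu> 0 = return (PiM {0..<0} (\<lambda>_. E)) (\<lambda>_. undefined)"
| "fdd \<nu> (Suc 0) = distr \<nu> (PiM {0..<Suc 0} (\<lambda>_. E)) (\<lambda>e. (\<lambda>_. undefined)(0 := e))"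
| "fdd \<nu> (Suc (Suc n)) = fdd \<nu> (Suc n) \<bind> extend_path (Suc n)"

lemma measurable_extend_path[measurable]:
  "extend_path (Suc n) \<in> PiM {0..<Suc n} (\<lambda>_. E) \<rightarrow>\<^sub>M prob_algebra (PiM {0..<Suc (Suc n)} (\<lambda>_. E))"
  unfolding extend_path_def[abs_def]
  by (rule measurable_distr_prob_space2[where M=E])
     (measurable, rule measurable_fun_upd[where J="{0..<Suc n}"], auto)

lemma measurable_singleton_path[measurable]:
  "(\<lambda>e. (\<lambda>_. undefined)(0 := e)) \<in> E \<rightarrow>\<^sub>M PiM {0..<Suc 0} (\<lambda>_. E)"
  by (rule measurable_fun_upd[where J="{}"]) (auto simp: measurable_const)

lemma measurable_fdd:
  assumes \<kappa>[measurable]: "\<kappa> \<in> \<Lambda> \<rightarrow>\<^sub>M prob_algebra E"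
  shows "(\<lambda>y. fdd (\<kappa> y) n) \<in> \<Lambda> \<rightarrow>\<^sub>M prob_algebra (PiM {0..<n} (\<lambda>_. E))"
proof (induction n rule: induct_nat_012)
  case 0
  show ?case
    unfolding fdd.simps
    by (rule measurable_const) (auto simp: space_prob_algebra prob_space_return)
next
  case 1
  show ?case
    unfolding fdd.simps
    by (rule measurable_distr_prob_space2[where M=E]) (auto simp: measurable_split_conv)
next
  case (ge2 n)
  then show ?case unfolding fdd.simps by (intro measurable_bind_prob_space) auto
qed

lemma fdd_in_prob_algebra:
  assumes "\<nu> \<in> space (prob_algebra E)"
  shows "fdd \<nu> n \<in> space (prob_algebra (PiM {0..<n} (\<lambda>_. E)))"
proof -
  have "(\<lambda>_::unit. \<nu>) \<in> count_space UNIV \<rightarrow>\<^sub>M prob_algebra E"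
    using assms by (rule measurable_const)
  from measurable_space[OF measurable_fdd[OF this], of "()"] show ?thesis by simp
qed

lemma fdd_bind:
  assumes \<kappa>[measurable]: "\<kappa> \<in> \<Lambda> \<rightarrow>\<^sub>M prob_algebra E"
    and \<mu>: "\<mu> \<in> space (prob_algebra \<Lambda>)"
  shows "fdd (\<mu> \<bind> \<kappa>) n = \<mu> \<bind> (\<lambda>y. fdd (\<kappa> y) n)"
proof -
  have sets_\<mu>[measurable_cong]: "sets \<mu> = sets \<Lambda>" and prob_\<mu>: "prob_space \<mu>"
    using \<mu> by (auto simp: space_prob_algebra)
  have ne: "space \<mu> \<noteq> {}" using prob_\<mu> prob_space.not_empty by blast
  have \<kappa>': "\<kappa> \<in> \<mu> \<rightarrow>\<^sub>M subprob_algebra E"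
    using measurable_prob_algebraD[OF \<kappa>] by (simp add: measurable_cong_sets[OF sets_\<mu> refl])
  show ?thesis
  proof (induction n rule: induct_nat_012)
    case 0
    show ?case
      by (simp, rule bind_const'[symmetric, OF prob_\<mu>])
         (simp add: prob_space_imp_subprob_space prob_space_return)
  next
    case 1
    show ?case by (simp, rule distr_bind[OF \<kappa>' ne], simp)
  next
    case (ge2 n)
    have "(\<lambda>y. fdd (\<kappa> y) (Suc n)) \<in> \<mu> \<rightarrow>\<^sub>M subprob_algebra (PiM {0..<Suc n} (\<lambda>_. E))"
      using measurable_prob_algebraD[OF measurable_fdd[OF \<kappa>]]
      by (simp add: measurable_cong_sets[OF sets_\<mu> refl])
    with ge2(2) show ?case
      by (simp add: bind_assoc[OF _ measurable_prob_algebraD[OF measurable_extend_path]])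
  qed
qed

lemma Ionescu_Tulcea_history_kernel:
  assumes "\<nu> \<in> space (prob_algebra E)"
  shows "Ionescu_Tulcea (history_kernel \<nu>) (\<lambda>_. E)"
proof (rule Ionescu_Tulcea.intro)
  fix i
  show "history_kernel \<nu> i \<in> PiM {0..<i} (\<lambda>_. E) \<rightarrow>\<^sub>M subprob_algebra E"
  proof (cases i)
    case 0
    then show ?thesis using assms
      by (simp add: history_kernel_def[abs_def], intro measurable_const)
         (auto simp: space_subprob_algebra space_prob_algebra prob_space_imp_subprob_space)
  next
    case (Suc j)
    then show ?thesis
      by (simp add: history_kernel_def[abs_def], intro measurable_prob_algebraD) measurable
  qed
next
  fix i :: nat and x assume x: "x \<in> space (PiM {0..<i} (\<lambda>_. E))"
  show "prob_space (history_kernel \<nu> i x)"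
  proof (cases i)
    case 0
    then show ?thesis using assms by (simp add: history_kernel_def space_prob_algebra)
  next
    case (Suc j)
    with x have "x (i - 1) \<in> space E" by (auto simp: space_PiM PiE_iff)
    from measurable_space[OF K this] Suc show ?thesis
      by (simp add: history_kernel_def space_prob_algebra)
  qed
qed

lemma Ionescu_Tulcea_C_eq_fdd:
  assumes \<nu>: "\<nu> \<in> space (prob_algebra E)"
  shows "Ionescu_Tulcea.C (history_kernel \<nu>) (\<lambda>_. E) 0 n (\<lambda>_. undefined) = fdd \<nu> n"
proof -
  interpret T: Ionescu_Tulcea "history_kernel \<nu>" "\<lambda>_. E"
    by (rule Ionescu_Tulcea_history_kernel[OF \<nu>])
  have eP: "T.eP (Suc n) = extend_path (Suc n)" for n
    by (rule ext, subst T.eP_def) (simp add: extend_path_def history_kernel_def)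
  show ?thesis
  proof (induction n rule: induct_nat_012)
    case 1
    have "T.C 0 (Suc 0) (\<lambda>_. undefined)
        = return (PiM {0..<0} (\<lambda>_. E)) (\<lambda>_. undefined) \<bind> T.eP 0"
      by simp
    also have "\<dots> = T.eP 0 (\<lambda>_. undefined)"
      by (rule bind_return[OF T.measurable_eP]) simp
    also have "\<dots> = fdd \<nu> (Suc 0)" by (subst T.eP_def) (simp add: history_kernel_def)
    finally show ?case .
  qed (simp_all add: eP)
qed

lemma
  assumes \<nu>: "\<nu> \<in> space (prob_algebra E)"
  shows sets_chain_law: "sets (chain_law \<nu>) = sets (PiM UNIV (\<lambda>_. E))"
    and space_chain_law: "space (chain_law \<nu>) = space (PiM UNIV (\<lambda>_. E))"
proof -
  interpret T: Ionescu_Tulcea "history_kernel \<nu>" "\<lambda>_. E"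
    by (rule Ionescu_Tulcea_history_kernel[OF \<nu>])
  show "sets (chain_law \<nu>) = sets (PiM UNIV (\<lambda>_. E))"
    unfolding chain_law_def by (rule T.PF.sets_lim)
  show "space (chain_law \<nu>) = space (PiM UNIV (\<lambda>_. E))"
    unfolding chain_law_def by (rule T.PF.space_lim)
qed

lemma emeasure_chain_law_prod_emb:
  assumes \<nu>: "\<nu> \<in> space (prob_algebra E)"
    and X: "X \<in> sets (PiM {0..<n} (\<lambda>_. E))"
  shows "emeasure (chain_law \<nu>) (prod_emb UNIV (\<lambda>_. E) {0..<n} X) = emeasure (fdd \<nu> n) X"
proof -
  interpret T: Ionescu_Tulcea "history_kernel \<nu>" "\<lambda>_. E"
    by (rule Ionescu_Tulcea_history_kernel[OF \<nu>])
  have "emeasure (chain_law \<nu>) (prod_emb UNIV (\<lambda>_. E) {0..<n} X) = emeasure (T.CI {0..<n}) X"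
    unfolding chain_law_def by (rule T.lim) (use X in auto)
  also have "\<dots> = emeasure (T.C 0 n (\<lambda>_. undefined)) (prod_emb {0..<n} (\<lambda>_. E) {0..<n} X)"
    by (rule T.emeasure_CI) (use X in auto)
  also have "prod_emb {0..<n} (\<lambda>_. E) {0..<n} X = X"
    using sets.sets_into_space[OF X] by (intro prod_emb_id) (simp add: space_PiM)
  finally show ?thesis by (simp add: Ionescu_Tulcea_C_eq_fdd[OF \<nu>])
qed

lemma prob_space_chain_law:
  assumes \<nu>: "\<nu> \<in> space (prob_algebra E)"
  shows "prob_space (chain_law \<nu>)"
proof
  have "space (chain_law \<nu>) = prod_emb UNIV (\<lambda>_. E) {0..<0} (space (PiM {0..<0} (\<lambda>_. E)))"
    by (auto simp: space_chain_law[OF \<nu>] prod_emb_def space_PiM PiE_iff restrict_def)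
  then show "emeasure (chain_law \<nu>) (space (chain_law \<nu>)) = 1"
    by (simp only:) (subst emeasure_chain_law_prod_emb[OF \<nu>], auto)
qed

lemma chain_law_eqI:
  assumes \<nu>: "\<nu> \<in> space (prob_algebra E)"
    and N: "sets N = sets (PiM UNIV (\<lambda>_. E))" "finite_measure N"
    and eq: "\<And>n X. X \<in> sets (PiM {0..<n} (\<lambda>_. E)) \<Longrightarrow>
       emeasure N (prod_emb UNIV (\<lambda>_. E) {0..<n} X) = emeasure (fdd \<nu> n) X"
  shows "N = chain_law \<nu>"
proof (rule measure_eqI_PiM_infinite[OF N(1) sets_chain_law[OF \<nu>] _ N(2)])
  fix J :: "nat set" and A assume J: "finite J" and A: "\<And>i. i \<in> J \<Longrightarrow> A i \<in> sets E"
  have "Pi\<^sub>E J A \<in> sets (PiM J (\<lambda>_. E))" using J A by (intro sets_PiM_I_finite) auto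
  from prod_emb_initial_segment[OF J this] obtain n Y where Y: "Y \<in> sets (PiM {0..<n} (\<lambda>_. E))"
    and eqY: "prod_emb UNIV (\<lambda>_. E) J (Pi\<^sub>E J A) = prod_emb UNIV (\<lambda>_. E) {0..<n} Y" .
  show "emeasure N (prod_emb UNIV (\<lambda>_. E) J (Pi\<^sub>E J A))
      = emeasure (chain_law \<nu>) (prod_emb UNIV (\<lambda>_. E) J (Pi\<^sub>E J A))"
    unfolding eqY eq[OF Y] emeasure_chain_law_prod_emb[OF \<nu> Y] ..
qed

lemma measurable_chain_law:
  assumes \<kappa>[measurable]: "\<kappa> \<in> \<Lambda> \<rightarrow>\<^sub>M prob_algebra E"
  shows "(\<lambda>y. chain_law (\<kappa> y)) \<in> \<Lambda> \<rightarrow>\<^sub>M prob_algebra (PiM UNIV (\<lambda>_. E))"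
proof (rule measurable_prob_algebra_generated[where \<Omega>="space (PiM UNIV (\<lambda>_. E))"
      and G="prod_algebra (UNIV :: nat set) (\<lambda>_. E)"])
  show "sets (PiM UNIV (\<lambda>_. E)) = sigma_sets (space (PiM UNIV (\<lambda>_. E))) (prod_algebra (UNIV :: nat set) (\<lambda>_. E))"
    by (simp add: sets_PiM space_PiM)
  show "Int_stable (prod_algebra (UNIV :: nat set) (\<lambda>_. E))" by (rule Int_stable_prod_algebra)
  show "prod_algebra (UNIV :: nat set) (\<lambda>_. E) \<subseteq> Pow (space (PiM UNIV (\<lambda>_. E)))"
    using prod_algebra_sets_into_space by (simp add: space_PiM)
next
  fix a assume "a \<in> space \<Lambda>"
  then have \<kappa>a: "\<kappa> a \<in> space (prob_algebra E)" by (rule measurable_space[OF \<kappa>])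
  show "prob_space (chain_law (\<kappa> a))" by (rule prob_space_chain_law[OF \<kappa>a])
  show "sets (chain_law (\<kappa> a)) = sets (PiM UNIV (\<lambda>_. E))" by (rule sets_chain_law[OF \<kappa>a])
next
  fix A assume "A \<in> prod_algebra (UNIV :: nat set) (\<lambda>_. E)"
  then obtain J X where A: "A = prod_emb UNIV (\<lambda>_. E) J (Pi\<^sub>E J X)" and J: "finite J"
    and X: "\<And>i. i \<in> J \<Longrightarrow> X i \<in> sets E"
    by (auto elim!: prod_algebraE)
  have "Pi\<^sub>E J X \<in> sets (PiM J (\<lambda>_. E))" using J X by (intro sets_PiM_I_finite) auto
  from prod_emb_initial_segment[OF J this] obtain n Y where Y: "Y \<in> sets (PiM {0..<n} (\<lambda>_. E))"
    and eqY: "A = prod_emb UNIV (\<lambda>_. E) {0..<n} Y" unfolding A by blast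
  have "(\<lambda>a. emeasure (fdd (\<kappa> a) n) Y) \<in> borel_measurable \<Lambda>"
    using measurable_compose[OF measurable_prob_algebraD[OF measurable_fdd[OF \<kappa>]]
        measurable_emeasure_subprob_algebra[OF Y]] .
  moreover have "(\<lambda>a. emeasure (chain_law (\<kappa> a)) A) \<in> borel_measurable \<Lambda>
      \<longleftrightarrow> (\<lambda>a. emeasure (fdd (\<kappa> a) n) Y) \<in> borel_measurable \<Lambda>"
    by (rule measurable_cong)
       (simp add: eqY emeasure_chain_law_prod_emb[OF measurable_space[OF \<kappa>] Y])
  ultimately show "(\<lambda>a. emeasure (chain_law (\<kappa> a)) A) \<in> borel_measurable \<Lambda>" by simp
qed

lemma chain_law_bind:
  assumes \<kappa>[measurable]: "\<kappa> \<in> \<Lambda> \<rightarrow>\<^sub>M prob_algebra E"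
    and \<mu>: "\<mu> \<in> space (prob_algebra \<Lambda>)"
  shows "chain_law (\<mu> \<bind> \<kappa>) = \<mu> \<bind> (\<lambda>y. chain_law (\<kappa> y))"
proof -
  have \<mu>\<kappa>: "\<mu> \<bind> \<kappa> \<in> space (prob_algebra E)"
    using sets_bind'[OF \<mu> \<kappa>] prob_space_bind'[OF \<mu> \<kappa>] by (simp add: space_prob_algebra)
  have "sets \<mu> = sets \<Lambda>" using \<mu> by (simp add: space_prob_algebra)
  then have space_\<mu>: "space \<mu> = space \<Lambda>" by (rule sets_eq_imp_space_eq)
  note chain = measurable_chain_law[OF \<kappa>]
  show ?thesis
  proof (rule chain_law_eqI[OF \<mu>\<kappa>, symmetric])
    show "sets (\<mu> \<bind> (\<lambda>y. chain_law (\<kappa> y))) = sets (PiM UNIV (\<lambda>_. E))"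
      by (rule sets_bind'[OF \<mu> chain])
    show "finite_measure (\<mu> \<bind> (\<lambda>y. chain_law (\<kappa> y)))"
      using prob_space_bind'[OF \<mu> chain] by (simp add: prob_space_def)
  next
    fix n :: nat and X assume X: "X \<in> sets (PiM {0..<n} (\<lambda>_. E))"
    have "emeasure (\<mu> \<bind> (\<lambda>y. chain_law (\<kappa> y))) (prod_emb UNIV (\<lambda>_. E) {0..<n} X)
        = (\<integral>\<^sup>+y. emeasure (chain_law (\<kappa> y)) (prod_emb UNIV (\<lambda>_. E) {0..<n} X) \<partial>\<mu>)"
      by (rule emeasure_bind_prob_algebra[OF \<mu> chain]) (use X in auto)
    also have "\<dots> = (\<integral>\<^sup>+y. emeasure (fdd (\<kappa> y) n) X \<partial>\<mu>)"
      by (rule nn_integral_cong)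
         (simp add: space_\<mu> emeasure_chain_law_prod_emb[OF measurable_space[OF \<kappa>] X])
    also have "\<dots> = emeasure (\<mu> \<bind> (\<lambda>y. fdd (\<kappa> y) n)) X"
      by (rule emeasure_bind_prob_algebra[OF \<mu> measurable_fdd[OF \<kappa>] X, symmetric])
    also have "\<dots> = emeasure (fdd (\<mu> \<bind> \<kappa>) n) X" by (simp add: fdd_bind[OF \<kappa> \<mu>])
    finally show "emeasure (\<mu> \<bind> (\<lambda>y. chain_law (\<kappa> y))) (prod_emb UNIV (\<lambda>_. E) {0..<n} X)
        = emeasure (fdd (\<mu> \<bind> \<kappa>) n) X" .
  qed
qed


definition path_shift :: "(nat \<Rightarrow> 'e) \<Rightarrow> nat \<Rightarrow> 'e" where
  "path_shift \<omega> = (\<lambda>t. \<omega> (Suc t))"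

definition shift_prefix :: "nat \<Rightarrow> (nat \<Rightarrow> 'e) \<Rightarrow> nat \<Rightarrow> 'e" where
  "shift_prefix n \<omega> = restrict (path_shift \<omega>) {0..<n}"

lemma measurable_path_shift[measurable]:
  "path_shift \<in> PiM UNIV (\<lambda>_. E) \<rightarrow>\<^sub>M PiM UNIV (\<lambda>_. E)"
proof -
  have "(\<lambda>\<omega>. \<lambda>i\<in>UNIV. \<omega> (Suc i)) \<in> PiM UNIV (\<lambda>_. E) \<rightarrow>\<^sub>M PiM UNIV (\<lambda>_. E)"
    by (rule measurable_restrict) auto
  then show ?thesis by (simp add: path_shift_def[abs_def] restrict_def)
qed

lemma measurable_shift_prefix[measurable]:
  "shift_prefix n \<in> PiM {0..<Suc n} (\<lambda>_. E) \<rightarrow>\<^sub>M PiM {0..<n} (\<lambda>_. E)"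
  unfolding shift_prefix_def[abs_def] path_shift_def by (rule measurable_restrict) auto

lemma sets_K: "e \<in> space E \<Longrightarrow> sets (K e) = sets E"
  using measurable_space[OF K] by (simp add: space_prob_algebra)

lemma distr_extend_singleton_shift_prefix:
  assumes e: "e \<in> space E"
  shows "distr (extend_path (Suc 0) ((\<lambda>_. undefined)(0 := e))) (PiM {0..<Suc 0} (\<lambda>_. E))
      (shift_prefix (Suc 0))
    = distr (K e) (PiM {0..<Suc 0} (\<lambda>_. E)) (\<lambda>e. (\<lambda>_. undefined)(0 := e))"
proof -
  let ?\<omega> = "(\<lambda>_. undefined)(0 := e)"
  have "fun_upd ?\<omega> (Suc 0) \<in> K e \<rightarrow>\<^sub>M PiM {0..<Suc (Suc 0)} (\<lambda>_. E)"
    unfolding measurable_cong_sets[OF sets_K[OF e] refl]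
    by (rule measurable_fun_upd[where J="{0..<Suc 0}"]) (use e in auto)
  then have "distr (extend_path (Suc 0) ?\<omega>) (PiM {0..<Suc 0} (\<lambda>_. E)) (shift_prefix (Suc 0))
      = distr (K e) (PiM {0..<Suc 0} (\<lambda>_. E)) (shift_prefix (Suc 0) \<circ> fun_upd ?\<omega> (Suc 0))"
    unfolding extend_path_def diff_Suc_1 fun_upd_same by (rule distr_distr[OF measurable_shift_prefix])
  also have "shift_prefix (Suc 0) \<circ> fun_upd ?\<omega> (Suc 0) = (\<lambda>e. (\<lambda>_. undefined)(0 := e))"
    by (auto simp: fun_eq_iff shift_prefix_def path_shift_def)
  finally show ?thesis .
qed

lemma distr_extend_path_shift_prefix:
  assumes \<omega>: "\<omega> \<in> space (PiM {0..<Suc (Suc n)} (\<lambda>_. E))"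
  shows "distr (extend_path (Suc (Suc n)) \<omega>) (PiM {0..<Suc (Suc n)} (\<lambda>_. E))
      (shift_prefix (Suc (Suc n)))
    = extend_path (Suc n) (shift_prefix (Suc n) \<omega>)"
proof -
  have \<omega>n: "\<omega> (Suc n) \<in> space E" using \<omega> by (auto simp: space_PiM PiE_iff)
  have "fun_upd \<omega> (Suc (Suc n)) \<in> E \<rightarrow>\<^sub>M PiM {0..<Suc (Suc (Suc n))} (\<lambda>_. E)"
    by (rule measurable_fun_upd[where J="{0..<Suc (Suc n)}"]) (use \<omega> in auto)
  then have "fun_upd \<omega> (Suc (Suc n)) \<in> K (\<omega> (Suc n)) \<rightarrow>\<^sub>M PiM {0..<Suc (Suc (Suc n))} (\<lambda>_. E)"
    by (simp add: measurable_cong_sets[OF sets_K[OF \<omega>n] refl])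
  then have "distr (extend_path (Suc (Suc n)) \<omega>) (PiM {0..<Suc (Suc n)} (\<lambda>_. E))
      (shift_prefix (Suc (Suc n)))
    = distr (K (\<omega> (Suc n))) (PiM {0..<Suc (Suc n)} (\<lambda>_. E))
        (shift_prefix (Suc (Suc n)) \<circ> fun_upd \<omega> (Suc (Suc n)))"
    unfolding extend_path_def diff_Suc_1 by (rule distr_distr[OF measurable_shift_prefix])
  also have "shift_prefix (Suc (Suc n)) \<circ> fun_upd \<omega> (Suc (Suc n))
      = fun_upd (shift_prefix (Suc n) \<omega>) (Suc n)"
    by (auto simp: fun_eq_iff shift_prefix_def path_shift_def)
  also have "distr (K (\<omega> (Suc n))) (PiM {0..<Suc (Suc n)} (\<lambda>_. E))
      (fun_upd (shift_prefix (Suc n) \<omega>) (Suc n)) = extend_path (Suc n) (shift_prefix (Suc n) \<omega>)"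
    by (simp add: extend_path_def shift_prefix_def path_shift_def)
  finally show ?thesis .
qed

lemma bind_K_in_prob_algebra:
  assumes \<nu>: "\<nu> \<in> space (prob_algebra E)"
  shows "\<nu> \<bind> K \<in> space (prob_algebra E)"
  using sets_bind'[OF \<nu> K] prob_space_bind'[OF \<nu> K] by (simp add: space_prob_algebra)

lemma distr_fdd_two_shift_prefix:
  assumes \<nu>: "\<nu> \<in> space (prob_algebra E)"
  shows "distr (fdd \<nu> (Suc (Suc 0))) (PiM {0..<Suc 0} (\<lambda>_. E)) (shift_prefix (Suc 0))
    = fdd (\<nu> \<bind> K) (Suc 0)"
proof -
  have sets_\<nu>: "sets \<nu> = sets E" and "prob_space \<nu>"
    using \<nu> by (auto simp: space_prob_algebra)
  then have ne: "space \<nu> \<noteq> {}" using prob_space.not_empty by blast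
  have space_\<nu>: "space \<nu> = space E" using sets_eq_imp_space_eq[OF sets_\<nu>] .
  let ?g = "\<lambda>e. (\<lambda>_. undefined)(0 := e)"
  have g: "?g \<in> \<nu> \<rightarrow>\<^sub>M PiM {0..<Suc 0} (\<lambda>_. E)"
    by (simp add: measurable_cong_sets[OF sets_\<nu> refl])
  have "fdd \<nu> (Suc (Suc 0)) = \<nu> \<bind> (\<lambda>e. extend_path (Suc 0) (?g e))"
    by (simp only: fdd.simps)
       (rule bind_distr[OF g measurable_prob_algebraD[OF measurable_extend_path] ne])
  then have "distr (fdd \<nu> (Suc (Suc 0))) (PiM {0..<Suc 0} (\<lambda>_. E)) (shift_prefix (Suc 0))
      = distr (\<nu> \<bind> (\<lambda>e. extend_path (Suc 0) (?g e))) (PiM {0..<Suc 0} (\<lambda>_. E))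
          (shift_prefix (Suc 0))"
    by (simp only:)
  also have "\<dots> = \<nu> \<bind> (\<lambda>e. distr (extend_path (Suc 0) (?g e)) (PiM {0..<Suc 0} (\<lambda>_. E))
                     (shift_prefix (Suc 0)))"
    by (rule distr_bind[OF measurable_compose[OF g measurable_prob_algebraD[OF measurable_extend_path]]
          ne measurable_shift_prefix])
  also have "\<dots> = \<nu> \<bind> (\<lambda>e. distr (K e) (PiM {0..<Suc 0} (\<lambda>_. E)) ?g)"
    by (rule bind_cong[OF refl], rule distr_extend_singleton_shift_prefix, simp add: space_\<nu>)
  also have "\<dots> = distr (\<nu> \<bind> K) (PiM {0..<Suc 0} (\<lambda>_. E)) ?g"
    by (rule distr_bind[symmetric, OF _ ne measurable_singleton_path])
       (simp add: measurable_cong_sets[OF sets_\<nu> refl] measurable_prob_algebraD)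
  also have "\<dots> = fdd (\<nu> \<bind> K) (Suc 0)" by simp
  finally show ?thesis .
qed

lemma distr_fdd_shift_prefix:
  assumes \<nu>: "\<nu> \<in> space (prob_algebra E)"
  shows "distr (fdd \<nu> (Suc n)) (PiM {0..<n} (\<lambda>_. E)) (shift_prefix n) = fdd (\<nu> \<bind> K) n"
proof -
  have sets_fdd[measurable_cong]: "sets (fdd \<nu> m) = sets (PiM {0..<m} (\<lambda>_. E))"
    and prob_fdd: "prob_space (fdd \<nu> m)" for m
    using fdd_in_prob_algebra[OF \<nu>, of m] by (auto simp: space_prob_algebra)
  have ne_fdd: "space (fdd \<nu> m) \<noteq> {}" for m using prob_fdd[of m] prob_space.not_empty by blast
  have space_fdd: "space (fdd \<nu> m) = space (PiM {0..<m} (\<lambda>_. E))" for m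
    using sets_eq_imp_space_eq[OF sets_fdd] .
  show ?thesis
  proof (induction n rule: induct_nat_012)
    case 0
    have "shift_prefix 0 = (\<lambda>_ _. undefined)" by (auto simp: shift_prefix_def fun_eq_iff)
    then show ?case
      by (simp only: fdd.simps(1)) (rule prob_space.distr_const[OF prob_fdd], simp)
  next
    case 1
    show ?case by (rule distr_fdd_two_shift_prefix[OF \<nu>])
  next
    case (ge2 n)
    have "distr (fdd \<nu> (Suc (Suc (Suc n)))) (PiM {0..<Suc (Suc n)} (\<lambda>_. E)) (shift_prefix (Suc (Suc n)))
        = fdd \<nu> (Suc (Suc n)) \<bind> (\<lambda>\<omega>. distr (extend_path (Suc (Suc n)) \<omega>)
            (PiM {0..<Suc (Suc n)} (\<lambda>_. E)) (shift_prefix (Suc (Suc n))))"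
      unfolding fdd.simps(3)[of \<nu> "Suc n"]
      by (rule distr_bind[OF _ ne_fdd measurable_shift_prefix],
          subst measurable_cong_sets[OF sets_fdd refl],
          rule measurable_prob_algebraD[OF measurable_extend_path])
    also have "\<dots> = fdd \<nu> (Suc (Suc n)) \<bind> (\<lambda>\<omega>. extend_path (Suc n) (shift_prefix (Suc n) \<omega>))"
      by (rule bind_cong[OF refl], rule distr_extend_path_shift_prefix, simp only: space_fdd)
    also have "\<dots> = distr (fdd \<nu> (Suc (Suc n))) (PiM {0..<Suc n} (\<lambda>_. E)) (shift_prefix (Suc n))
        \<bind> extend_path (Suc n)"
      by (rule bind_distr[symmetric, OF _ measurable_prob_algebraD[OF measurable_extend_path] ne_fdd])
         (subst measurable_cong_sets[OF sets_fdd refl], rule measurable_shift_prefix)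
    also have "\<dots> = fdd (\<nu> \<bind> K) (Suc (Suc n))" using ge2(2) by simp
    finally show ?case .
  qed
qed

lemma distr_chain_law_shift:
  assumes \<nu>: "\<nu> \<in> space (prob_algebra E)"
  shows "distr (chain_law \<nu>) (PiM UNIV (\<lambda>_. E)) path_shift = chain_law (\<nu> \<bind> K)"
proof (rule chain_law_eqI[OF bind_K_in_prob_algebra[OF \<nu>]])
  have shift: "path_shift \<in> chain_law \<nu> \<rightarrow>\<^sub>M PiM UNIV (\<lambda>_. E)"
    by (simp add: measurable_cong_sets[OF sets_chain_law[OF \<nu>] refl])
  show "sets (distr (chain_law \<nu>) (PiM UNIV (\<lambda>_. E)) path_shift) = sets (PiM UNIV (\<lambda>_. E))"
    by simp
  show "finite_measure (distr (chain_law \<nu>) (PiM UNIV (\<lambda>_. E)) path_shift)"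
    using prob_space.prob_space_distr[OF prob_space_chain_law[OF \<nu>] shift]
    by (simp add: prob_space_def)
  fix n :: nat and X assume X: "X \<in> sets (PiM {0..<n} (\<lambda>_. E))"
  let ?Y = "shift_prefix n -` X \<inter> space (PiM {0..<Suc n} (\<lambda>_. E))"
  have Y: "?Y \<in> sets (PiM {0..<Suc n} (\<lambda>_. E))"
    using measurable_sets[OF measurable_shift_prefix X] .
  have "shift_prefix n (restrict \<omega> {0..<Suc n}) = restrict (path_shift \<omega>) {0..<n}" for \<omega>
    by (auto simp: shift_prefix_def path_shift_def fun_eq_iff)
  then have preimage: "path_shift -` prod_emb UNIV (\<lambda>_. E) {0..<n} X \<inter> space (chain_law \<nu>)
      = prod_emb UNIV (\<lambda>_. E) {0..<Suc n} ?Y"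
    by (auto simp: space_chain_law[OF \<nu>] prod_emb_def)
       (auto simp: space_PiM PiE_iff path_shift_def)
  have sets_fdd: "sets (fdd \<nu> (Suc n)) = sets (PiM {0..<Suc n} (\<lambda>_. E))"
    using fdd_in_prob_algebra[OF \<nu>, of "Suc n"] by (simp add: space_prob_algebra)
  have "emeasure (distr (chain_law \<nu>) (PiM UNIV (\<lambda>_. E)) path_shift) (prod_emb UNIV (\<lambda>_. E) {0..<n} X)
      = emeasure (chain_law \<nu>) (path_shift -` prod_emb UNIV (\<lambda>_. E) {0..<n} X \<inter> space (chain_law \<nu>))"
    by (rule emeasure_distr[OF shift]) (use X in auto)
  also have "\<dots> = emeasure (fdd \<nu> (Suc n)) ?Y"
    unfolding preimage by (rule emeasure_chain_law_prod_emb[OF \<nu> Y])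
  also have "\<dots> = emeasure (distr (fdd \<nu> (Suc n)) (PiM {0..<n} (\<lambda>_. E)) (shift_prefix n)) X"
    by (subst emeasure_distr[OF _ X])
       (simp_all add: measurable_cong_sets[OF sets_fdd refl] sets_eq_imp_space_eq[OF sets_fdd])
  finally show "emeasure (distr (chain_law \<nu>) (PiM UNIV (\<lambda>_. E)) path_shift)
      (prod_emb UNIV (\<lambda>_. E) {0..<n} X) = emeasure (fdd (\<nu> \<bind> K) n) X"
    by (simp add: distr_fdd_shift_prefix[OF \<nu>])
qed

lemma distr_chain_law_initial:
  assumes \<nu>: "\<nu> \<in> space (prob_algebra E)"
  shows "distr (chain_law \<nu>) E (\<lambda>\<omega>. \<omega> 0) = \<nu>"
proof (rule measure_eqI)
  have sets_\<nu>: "sets \<nu> = sets E" using \<nu> by (auto simp: space_prob_algebra)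
  then show "sets (distr (chain_law \<nu>) E (\<lambda>\<omega>. \<omega> 0)) = sets \<nu>" by simp
  fix A assume "A \<in> sets (distr (chain_law \<nu>) E (\<lambda>\<omega>. \<omega> 0))"
  then have A: "A \<in> sets E" by simp
  let ?Y = "(\<lambda>h. h 0) -` A \<inter> space (PiM {0..<Suc 0} (\<lambda>_. E))"
  have Y: "?Y \<in> sets (PiM {0..<Suc 0} (\<lambda>_. E))" by (rule measurable_sets[OF _ A]) simp
  have preimage: "(\<lambda>\<omega>. \<omega> 0) -` A \<inter> space (chain_law \<nu>) = prod_emb UNIV (\<lambda>_. E) {0..<Suc 0} ?Y"
    by (auto simp: space_chain_law[OF \<nu>] prod_emb_def space_PiM PiE_iff)
  have coord0: "(\<lambda>\<omega>. \<omega> 0) \<in> chain_law \<nu> \<rightarrow>\<^sub>M E"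
    by (simp add: measurable_cong_sets[OF sets_chain_law[OF \<nu>] refl])
  have singleton: "(\<lambda>e. (\<lambda>_. undefined)(0 := e)) \<in> \<nu> \<rightarrow>\<^sub>M PiM {0..<Suc 0} (\<lambda>_. E)"
    by (simp add: measurable_cong_sets[OF sets_\<nu> refl])
  have "emeasure (distr (chain_law \<nu>) E (\<lambda>\<omega>. \<omega> 0)) A
      = emeasure (chain_law \<nu>) ((\<lambda>\<omega>. \<omega> 0) -` A \<inter> space (chain_law \<nu>))"
    by (rule emeasure_distr[OF coord0 A])
  also have "\<dots> = emeasure (fdd \<nu> (Suc 0)) ?Y"
    unfolding preimage by (rule emeasure_chain_law_prod_emb[OF \<nu> Y])
  also have "\<dots> = emeasure \<nu> ((\<lambda>e. (\<lambda>_. undefined)(0 := e)) -` ?Y \<inter> space \<nu>)"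
    by (simp only: fdd.simps, rule emeasure_distr[OF singleton Y])
  also have "(\<lambda>e. (\<lambda>_. undefined)(0 := e)) -` ?Y \<inter> space \<nu> = A"
    using sets.sets_into_space[OF A] sets_eq_imp_space_eq[OF sets_\<nu>]
    by (auto simp: space_PiM PiE_iff)
  finally show "emeasure (distr (chain_law \<nu>) E (\<lambda>\<omega>. \<omega> 0)) A = emeasure \<nu> A" .
qed

end

section \<open>The product MDP under a stationary policy\<close>

locale product_mdp =
  fixes Ms :: "'s measure" and Ma :: "'a measure"
    and P :: "'s \<Rightarrow> 'a \<Rightarrow> 's measure"
    and AP :: "'ap set" and L :: "'s \<Rightarrow> 'ap set"
    and Q :: "'q set" and \<delta> :: "'q \<Rightarrow> 'ap set \<Rightarrow> 'q"
    and \<pi> :: "'s \<times> 'q \<Rightarrow> 'a measure"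
  assumes P_kernel: "(\<lambda>(s, a). P s a) \<in> Ms \<Otimes>\<^sub>M Ma \<rightarrow>\<^sub>M prob_algebra Ms"
    and AP: "finite AP"
    and L: "L \<in> Ms \<rightarrow>\<^sub>M count_space UNIV" "\<And>s. s \<in> space Ms \<Longrightarrow> L s \<subseteq> AP"
    and delta: "\<And>q \<sigma>. q \<in> Q \<Longrightarrow> \<sigma> \<subseteq> AP \<Longrightarrow> \<delta> q \<sigma> \<in> Q"
    and policy: "\<pi> \<in> prod_space Ms Q \<rightarrow>\<^sub>M prob_algebra Ma"
begin

abbreviation "Mx \<equiv> prod_space Ms Q"
abbreviation "Mxa \<equiv> Mx \<Otimes>\<^sub>M Ma"
abbreviation "Paths \<equiv> PiM (UNIV :: nat set) (\<lambda>_. Mxa)"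

definition Pr :: "'s \<times> 'q \<Rightarrow> (nat \<Rightarrow> ('s \<times> 'q) \<times> 'a) measure" where
  "Pr = path_measure Mx Ma (prod_kernel Ms Q P L \<delta>) \<pi>"

definition policy_step :: "'s \<times> 'q \<Rightarrow> (('s \<times> 'q) \<times> 'a) measure" where
  "policy_step y = distr (\<pi> y) Mxa (\<lambda>a. (y, a))"

definition next_state :: "('s \<times> 'q) \<times> 'a \<Rightarrow> ('s \<times> 'q) measure" where
  "next_state e = prod_kernel Ms Q P L \<delta> (fst e) (snd e)"

definition pair_kernel :: "('s \<times> 'q) \<times> 'a \<Rightarrow> (('s \<times> 'q) \<times> 'a) measure" where
  "pair_kernel e = next_state e \<bind> policy_step"

lemma measurable_automaton_step: "(\<lambda>x. \<delta> (snd x) (L (fst x))) \<in> Mx \<rightarrow>\<^sub>M count_space Q"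
proof (rule measurable_compose_countable'[where I="Pow AP" and g="\<lambda>x. L (fst x)"])
  fix \<sigma> assume "\<sigma> \<in> Pow AP"
  then have "(\<lambda>q. \<delta> q \<sigma>) \<in> count_space Q \<rightarrow>\<^sub>M count_space Q" using delta by auto
  then show "(\<lambda>x. \<delta> (snd x) \<sigma>) \<in> Mx \<rightarrow>\<^sub>M count_space Q"
    unfolding prod_space_def by (rule measurable_compose[OF measurable_snd])
next
  have "L \<in> Ms \<rightarrow>\<^sub>M count_space (Pow AP)"
    using AP L(2) measurable_sets[OF L(1)] by (subst measurable_count_space_eq2) auto
  then show "(\<lambda>x. L (fst x)) \<in> Mx \<rightarrow>\<^sub>M count_space (Pow AP)"
    unfolding prod_space_def by (rule measurable_compose[OF measurable_fst])
  show "countable (Pow AP)" using AP by (simp add: countable_finite)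
qed

lemma measurable_next_state: "next_state \<in> Mxa \<rightarrow>\<^sub>M prob_algebra Mx"
proof -
  have "next_state = (\<lambda>e. distr (P (fst (fst e)) (snd e)) Mx (\<lambda>s'. (s', \<delta> (snd (fst e)) (L (fst (fst e))))))"
    by (auto simp: fun_eq_iff next_state_def prod_kernel_def)
  also have "\<dots> \<in> Mxa \<rightarrow>\<^sub>M prob_algebra Mx"
  proof (rule measurable_distr_prob_space2[where M=Ms])
    have "(\<lambda>e. (fst (fst e), snd e)) \<in> Mxa \<rightarrow>\<^sub>M Ms \<Otimes>\<^sub>M Ma"
      unfolding prod_space_def by measurable
    from measurable_compose[OF this P_kernel]
    show "(\<lambda>e. P (fst (fst e)) (snd e)) \<in> Mxa \<rightarrow>\<^sub>M prob_algebra Ms" by simp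
    have "(\<lambda>x. \<delta> (snd (fst (fst x))) (L (fst (fst (fst x))))) \<in> Mxa \<Otimes>\<^sub>M Ms \<rightarrow>\<^sub>M count_space Q"
      by (rule measurable_compose[OF _ measurable_automaton_step]) measurable
    then show "(\<lambda>(e, s'). (s', \<delta> (snd (fst e)) (L (fst (fst e))))) \<in> Mxa \<Otimes>\<^sub>M Ms \<rightarrow>\<^sub>M Mx"
      unfolding prod_space_def split_beta' by (intro measurable_Pair measurable_snd)
  qed
  finally show ?thesis .
qed

lemma measurable_policy_step: "policy_step \<in> Mx \<rightarrow>\<^sub>M prob_algebra Mxa"
  unfolding policy_step_def[abs_def]
  by (rule measurable_distr_prob_space2[where M=Ma, OF policy]) (simp add: split_beta')

lemma measurable_pair_kernel: "pair_kernel \<in> Mxa \<rightarrow>\<^sub>M prob_algebra Mxa"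
  unfolding pair_kernel_def[abs_def]
  by (rule measurable_bind_prob_space[OF measurable_next_state measurable_policy_step])

sublocale chain: kernel_chain Mxa pair_kernel
  by unfold_locales (rule measurable_pair_kernel)

lemma policy_step_in_prob_algebra: "x \<in> space Mx \<Longrightarrow> policy_step x \<in> space (prob_algebra Mxa)"
  using measurable_space[OF measurable_policy_step] .

lemma Pr_eq_chain_law:
  assumes x: "x \<in> space Mx"
  shows "Pr x = chain.chain_law (policy_step x)"
proof -
  have "step_kernel Mx Ma (prod_kernel Ms Q P L \<delta>) \<pi> x i h = chain.history_kernel (policy_step x) i h"
    for i h
  proof -
    have "step_kernel Mx Ma (prod_kernel Ms Q P L \<delta>) \<pi> x i h
      = (if i = 0 then return Mx x else prod_kernel Ms Q P L \<delta> (fst (h (i - 1))) (snd (h (i - 1))))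
          \<bind> policy_step"
      by (simp add: step_kernel_def policy_step_def[abs_def])
    then show ?thesis
      by (simp add: chain.history_kernel_def pair_kernel_def next_state_def
          bind_return[OF measurable_prob_algebraD[OF measurable_policy_step] x])
  qed
  then have "step_kernel Mx Ma (prod_kernel Ms Q P L \<delta>) \<pi> x = chain.history_kernel (policy_step x)"
    by (intro ext)
  then show ?thesis by (simp add: Pr_def path_measure_def chain.chain_law_def)
qed

lemma measurable_Pr: "Pr \<in> Mx \<rightarrow>\<^sub>M prob_algebra Paths"
  by (subst measurable_cong[OF Pr_eq_chain_law])
     (simp_all add: chain.measurable_chain_law[OF measurable_policy_step])

lemma
  assumes x: "x \<in> space Mx"
  shows prob_space_Pr: "prob_space (Pr x)"
    and sets_Pr[measurable_cong]: "sets (Pr x) = sets Paths"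
    and space_Pr: "space (Pr x) = space Paths"
  using chain.prob_space_chain_law chain.sets_chain_law chain.space_chain_law
    policy_step_in_prob_algebra[OF x]
  by (simp_all add: Pr_eq_chain_law[OF x])

lemma fst_path_in_space: "\<omega> \<in> space Paths \<Longrightarrow> fst (\<omega> t) \<in> space Mx"
  by (simp add: space_PiM PiE_iff space_pair_measure mem_Times_iff)

lemma integrable_Pr_bounded:
  fixes f :: "_ \<Rightarrow> real"
  assumes x: "x \<in> space Mx" and f: "f \<in> borel_measurable Paths"
    and bound: "\<And>\<omega>. \<omega> \<in> space Paths \<Longrightarrow> \<bar>f \<omega>\<bar> \<le> B"
  shows "integrable (Pr x) f"
proof -
  interpret prob_space "Pr x" by (rule prob_space_Pr[OF x])
  show ?thesis
    by (rule integrable_const_bound[where B=B])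
       (use f bound in \<open>auto simp: space_Pr[OF x] measurable_cong_sets[OF sets_Pr[OF x] refl]\<close>)
qed

lemma integral_policy_step:
  fixes g :: "_ \<Rightarrow> real"
  assumes y: "y \<in> space Mx" and g: "g \<in> borel_measurable Mx"
  shows "(\<integral>e. g (fst e) \<partial>policy_step y) = g y"
proof -
  have sets: "sets (\<pi> y) = sets Ma" and prob: "prob_space (\<pi> y)"
    using measurable_space[OF policy y] by (auto simp: space_prob_algebra)
  have "(\<lambda>a. (y, a)) \<in> \<pi> y \<rightarrow>\<^sub>M Mxa"
    using y by (simp add: measurable_cong_sets[OF sets refl])
  then have "(\<integral>e. g (fst e) \<partial>policy_step y) = (\<integral>a. g y \<partial>\<pi> y)"
    unfolding policy_step_def by (subst integral_distr[OF _ measurable_compose[OF measurable_fst g]]) simp_all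
  also have "\<dots> = g y" using prob_space.prob_space[OF prob] by simp
  finally show ?thesis .
qed

lemma integral_Pr_initial:
  fixes g :: "_ \<Rightarrow> real"
  assumes x: "x \<in> space Mx" and g: "g \<in> borel_measurable Mx"
  shows "(\<integral>\<omega>. g (fst (\<omega> 0)) \<partial>Pr x) = g x"
proof -
  have "(\<lambda>\<omega>. \<omega> 0) \<in> Pr x \<rightarrow>\<^sub>M Mxa" by (simp add: measurable_cong_sets[OF sets_Pr[OF x] refl])
  then have "(\<integral>\<omega>. g (fst (\<omega> 0)) \<partial>Pr x) = (\<integral>e. g (fst e) \<partial>distr (Pr x) Mxa (\<lambda>\<omega>. \<omega> 0))"
    by (rule integral_distr[symmetric, OF _ measurable_compose[OF measurable_fst g]])
  also have "distr (Pr x) Mxa (\<lambda>\<omega>. \<omega> 0) = policy_step x"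
    by (simp add: Pr_eq_chain_law[OF x] chain.distr_chain_law_initial policy_step_in_prob_algebra[OF x])
  finally show ?thesis by (simp add: integral_policy_step[OF x g])
qed

definition next_law :: "'s \<times> 'q \<Rightarrow> ('s \<times> 'q) measure" where
  "next_law x = policy_step x \<bind> next_state"

lemma next_law_in_prob_algebra: "x \<in> space Mx \<Longrightarrow> next_law x \<in> space (prob_algebra Mx)"
  unfolding next_law_def
  using sets_bind'[OF policy_step_in_prob_algebra measurable_next_state]
    prob_space_bind'[OF policy_step_in_prob_algebra measurable_next_state]
  by (simp add: space_prob_algebra)

lemma
  assumes x: "x \<in> space Mx"
  shows sets_next_law: "sets (next_law x) = sets Mx"
    and space_next_law: "space (next_law x) = space Mx"
    and prob_space_next_law: "prob_space (next_law x)"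
proof -
  show sets: "sets (next_law x) = sets Mx" and "prob_space (next_law x)"
    using next_law_in_prob_algebra[OF x] by (auto simp: space_prob_algebra)
  show "space (next_law x) = space Mx" using sets_eq_imp_space_eq[OF sets] .
qed

lemma distr_Pr_shift:
  assumes x: "x \<in> space Mx"
  shows "distr (Pr x) Paths chain.path_shift = next_law x \<bind> Pr"
proof -
  have sets_step: "sets (policy_step x) = sets Mxa"
    using policy_step_in_prob_algebra[OF x] by (simp add: space_prob_algebra)
  have "next_state \<in> policy_step x \<rightarrow>\<^sub>M subprob_algebra Mx"
    by (simp add: measurable_cong_sets[OF sets_step refl] measurable_prob_algebraD[OF measurable_next_state])
  then have "policy_step x \<bind> pair_kernel = next_law x \<bind> policy_step"
    unfolding next_law_def pair_kernel_def[abs_def]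
    by (rule bind_assoc[symmetric, OF _ measurable_prob_algebraD[OF measurable_policy_step]])
  then have "distr (Pr x) Paths chain.path_shift = chain.chain_law (next_law x \<bind> policy_step)"
    by (simp add: Pr_eq_chain_law[OF x] chain.distr_chain_law_shift policy_step_in_prob_algebra[OF x])
  also have "\<dots> = next_law x \<bind> (\<lambda>y. chain.chain_law (policy_step y))"
    by (rule chain.chain_law_bind[OF measurable_policy_step next_law_in_prob_algebra[OF x]])
  also have "\<dots> = next_law x \<bind> Pr"
    by (rule bind_cong[OF refl]) (simp add: space_next_law[OF x] Pr_eq_chain_law)
  finally show ?thesis .
qed

lemma integral_Pr_shift:
  fixes f :: "_ \<Rightarrow> real"
  assumes x: "x \<in> space Mx" and f[measurable]: "f \<in> borel_measurable Paths"
    and bound: "\<And>\<omega>. \<omega> \<in> space Paths \<Longrightarrow> \<bar>f \<omega>\<bar> \<le> B"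
  shows "(\<integral>\<omega>. f (chain.path_shift \<omega>) \<partial>Pr x) = (\<integral>y. (\<integral>\<omega>. f \<omega> \<partial>Pr y) \<partial>next_law x)"
proof -
  have "chain.path_shift \<in> Pr x \<rightarrow>\<^sub>M Paths"
    by (simp add: measurable_cong_sets[OF sets_Pr[OF x] refl])
  then have "(\<integral>\<omega>. f (chain.path_shift \<omega>) \<partial>Pr x) = (\<integral>\<omega>. f \<omega> \<partial>distr (Pr x) Paths chain.path_shift)"
    by (rule integral_distr[symmetric, OF _ f])
  also have "\<dots> = (\<integral>\<omega>. f \<omega> \<partial>(next_law x \<bind> Pr))"
    by (simp only: distr_Pr_shift[OF x])
  also have "\<dots> = (\<integral>y. (\<integral>\<omega>. f \<omega> \<partial>Pr y) \<partial>next_law x)"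
  proof (rule integral_bind[OF f bound])
    show "Pr \<in> next_law x \<rightarrow>\<^sub>M subprob_algebra Paths"
      by (simp add: measurable_cong_sets[OF sets_next_law[OF x] refl]
          measurable_prob_algebraD[OF measurable_Pr])
    show "finite_measure (next_law x)"
      using prob_space_next_law[OF x] by (simp add: prob_space_def)
    show "AE y in next_law x. emeasure (Pr y) (space (Pr y)) \<le> ennreal 1"
      by (intro AE_I2) (simp add: space_next_law[OF x] prob_space.emeasure_space_1[OF prob_space_Pr])
  qed
  finally show ?thesis .
qed

theorem Markov_property:
  fixes f :: "_ \<Rightarrow> real"
  assumes x: "x \<in> space Mx" and f[measurable]: "f \<in> borel_measurable Paths"
    and bound: "\<And>\<omega>. \<omega> \<in> space Paths \<Longrightarrow> \<bar>f \<omega>\<bar> \<le> B"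
  shows "(\<integral>\<omega>. f (chain.path_shift \<omega>) \<partial>Pr x) = (\<integral>\<omega>. (\<integral>\<omega>'. f \<omega>' \<partial>Pr (fst (\<omega> 1))) \<partial>Pr x)"
proof -
  define g where "g y = (\<integral>\<omega>'. f \<omega>' \<partial>Pr y)" for y
  have g[measurable]: "g \<in> borel_measurable Mx"
    unfolding g_def[abs_def]
    by (rule measurable_compose[OF measurable_prob_algebraD[OF measurable_Pr]
          integral_measurable_subprob_algebra[OF f]])
  have g_bound: "\<bar>g y\<bar> \<le> B" if "y \<in> space Mx" for y
    unfolding g_def
    by (rule prob_space.abs_integral_le_bound[OF prob_space_Pr[OF that]])
       (simp_all add: space_Pr[OF that] measurable_cong_sets[OF sets_Pr[OF that] refl] bound)
  have "(\<integral>\<omega>. g (fst (\<omega> 1)) \<partial>Pr x) = (\<integral>\<omega>. g (fst (chain.path_shift \<omega> 0)) \<partial>Pr x)"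
    by (simp add: chain.path_shift_def)
  also have "\<dots> = (\<integral>y. (\<integral>\<omega>. g (fst (\<omega> 0)) \<partial>Pr y) \<partial>next_law x)"
  proof (rule integral_Pr_shift[OF x])
    show "(\<lambda>\<omega>. g (fst (\<omega> 0))) \<in> borel_measurable Paths" by measurable
    show "\<bar>g (fst (\<omega> 0))\<bar> \<le> B" if "\<omega> \<in> space Paths" for \<omega>
      using g_bound fst_path_in_space[OF that] by blast
  qed
  also have "\<dots> = (\<integral>y. g y \<partial>next_law x)"
    by (rule Bochner_Integration.integral_cong[OF refl])
       (simp add: space_next_law[OF x] integral_Pr_initial[OF _ g])
  also have "\<dots> = (\<integral>\<omega>. f (chain.path_shift \<omega>) \<partial>Pr x)"
    unfolding g_def by (rule integral_Pr_shift[OF x f bound, symmetric])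
  finally show ?thesis by (simp add: g_def)
qed


definition always :: "('s \<times> 'q) set \<Rightarrow> (nat \<Rightarrow> ('s \<times> 'q) \<times> 'a) set" where
  "always X = {\<omega> \<in> space Paths. \<forall>t. fst (\<omega> t) \<in> X}"

lemma always_in_sets:
  assumes X[measurable]: "X \<in> sets Mx"
  shows "always X \<in> sets Paths"
proof -
  have "Measurable.pred Paths (\<lambda>\<omega>. \<forall>t. fst (\<omega> t) \<in> X)"
    by (intro pred_intros_countable) measurable
  then show ?thesis unfolding always_def by (rule predE)
qed

lemma Abs_eq_always: "Abs Mx Pr X = {y \<in> space Mx. measure (Pr y) (always X) = 1}"
  unfolding Abs_def always_def by (auto simp: space_Pr)

lemma Abs_in_sets:
  assumes X: "X \<in> sets Mx"
  shows "Abs Mx Pr X \<in> sets Mx"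
proof -
  have "(\<lambda>y. measure (Pr y) (always X)) \<in> borel_measurable Mx"
    by (rule measurable_compose[OF measurable_Pr measurable_measure_prob_algebra[OF always_in_sets[OF X]]])
  then have "(\<lambda>y. measure (Pr y) (always X)) -` {1} \<inter> space Mx \<in> sets Mx"
    by (rule measurable_sets) simp
  also have "(\<lambda>y. measure (Pr y) (always X)) -` {1} \<inter> space Mx = Abs Mx Pr X"
    by (auto simp: Abs_eq_always)
  finally show ?thesis .
qed

lemma integrable_indicator_always:
  assumes y: "y \<in> space Mx" and X: "X \<in> sets Mx"
  shows "integrable (Pr y) (indicator (always X) :: _ \<Rightarrow> real)"
  by (rule integrable_Pr_bounded[OF y, where B=1])
     (simp_all add: borel_measurable_indicator[OF always_in_sets[OF X]])

lemma integral_indicator_always: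
  assumes y: "y \<in> space Mx" and X: "X \<in> sets Mx"
  shows "(\<integral>\<omega>. indicator (always X) \<omega> \<partial>Pr y) = measure (Pr y) (always X)"
  using always_in_sets[OF X] by (simp add: space_Pr[OF y] Int_absorb2 always_def)

lemma Abs_subset:
  assumes X[measurable]: "X \<in> sets Mx"
  shows "Abs Mx Pr X \<subseteq> X"
proof
  fix y assume "y \<in> Abs Mx Pr X"
  then have y: "y \<in> space Mx" and always: "measure (Pr y) (always X) = 1"
    by (auto simp: Abs_eq_always)
  have "integrable (Pr y) (\<lambda>\<omega>. indicator X (fst (\<omega> 0)) :: real)"
    by (rule integrable_Pr_bounded[OF y, where B=1]) simp_all
  then have "(\<integral>\<omega>. indicator (always X) \<omega> \<partial>Pr y) \<le> ((\<integral>\<omega>. indicator X (fst (\<omega> 0)) \<partial>Pr y) :: real)"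
    by (rule integral_mono[OF integrable_indicator_always[OF y X]])
       (auto simp: always_def indicator_def)
  then have "1 \<le> (indicator X y :: real)"
    by (simp only: integral_indicator_always[OF y X] always
        integral_Pr_initial[OF y borel_measurable_indicator[OF X]])
  then show "y \<in> X" by (cases "y \<in> X") auto
qed

lemma AE_next_in_Abs:
  assumes X[measurable]: "X \<in> sets Mx" and y: "y \<in> Abs Mx Pr X"
  shows "AE \<omega> in Pr y. fst (\<omega> 1) \<in> Abs Mx Pr X"
proof -
  have y_space: "y \<in> space Mx" and always: "measure (Pr y) (always X) = 1"
    using y by (auto simp: Abs_eq_always)
  interpret prob_space "Pr y" by (rule prob_space_Pr[OF y_space])
  define h where "h z = measure (Pr z) (always X)" for z
  have measurable_h[measurable]: "h \<in> borel_measurable Mx"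
    unfolding h_def[abs_def]
    by (rule measurable_compose[OF measurable_Pr measurable_measure_prob_algebra[OF always_in_sets[OF X]]])
  have h_le: "h z \<le> 1" if "z \<in> space Mx" for z
    unfolding h_def using prob_space.prob_le_1[OF prob_space_Pr[OF that]] .
  have "integrable (Pr y) (\<lambda>\<omega>. indicator (always X) (chain.path_shift \<omega>) :: real)"
    by (rule integrable_Pr_bounded[OF y_space measurable_compose[OF chain.measurable_path_shift
          borel_measurable_indicator[OF always_in_sets[OF X]]], where B=1]) simp
  then have "(\<integral>\<omega>. indicator (always X) \<omega> \<partial>Pr y)
      \<le> ((\<integral>\<omega>. indicator (always X) (chain.path_shift \<omega>) \<partial>Pr y) :: real)"
    by (rule integral_mono[OF integrable_indicator_always[OF y_space X]])
       (auto simp: indicator_def always_def chain.path_shift_def space_Pr[OF y_space] space_PiM PiE_iff)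
  also have "\<dots> = (\<integral>\<omega>. h (fst (\<omega> 1)) \<partial>Pr y)"
    using always_in_sets[OF X] fst_path_in_space
    by (subst Markov_property[OF y_space, where B=1])
       (auto intro!: Bochner_Integration.integral_cong simp: space_Pr[OF y_space] h_def
         integral_indicator_always[OF _ X])
  finally have "1 \<le> (\<integral>\<omega>. h (fst (\<omega> 1)) \<partial>Pr y)"
    by (simp only: integral_indicator_always[OF y_space X] always)
  moreover have "integrable (Pr y) (\<lambda>\<omega>. h (fst (\<omega> 1)))"
  proof (rule integrable_Pr_bounded[OF y_space, where B=1])
    show "(\<lambda>\<omega>. h (fst (\<omega> 1))) \<in> borel_measurable Paths" by measurable
    show "\<bar>h (fst (\<omega> 1))\<bar> \<le> 1" if "\<omega> \<in> space Paths" for \<omega>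
      using h_le[OF fst_path_in_space[OF that]] by (simp add: h_def)
  qed
  ultimately have "AE \<omega> in Pr y. h (fst (\<omega> 1)) = 1"
    by (intro AE_eq_const_of_integral_ge AE_I2) (simp_all add: space_Pr[OF y_space] h_le fst_path_in_space)
  then show ?thesis
    by (rule AE_mp) (auto intro!: AE_I2 simp: space_Pr[OF y_space] fst_path_in_space Abs_eq_always h_def)
qed

end

section \<open>Discounted reachability value\<close>

locale discounted_reach = product_mdp Ms Ma P AP L Q \<delta> \<pi>
  for Ms :: "'s measure" and Ma :: "'a measure" and P AP L and Q :: "'q set" and \<delta> \<pi> +
  fixes \<gamma> :: real and U :: "('s \<times> 'q) set"
  assumes gamma: "0 < \<gamma>" "\<gamma> < 1" and U[measurable]: "U \<in> sets Mx"
begin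

definition disc_return :: "(nat \<Rightarrow> ('s \<times> 'q) \<times> 'a) \<Rightarrow> real" where
  "disc_return \<omega> = (\<Sum>t. \<gamma> ^ t * indicator U (fst (\<omega> t)))"

definition V :: "'s \<times> 'q \<Rightarrow> real" where
  "V x = (\<integral>\<omega>. disc_return \<omega> \<partial>Pr x)"

lemma value_fun_indicator: "value_fun Pr \<gamma> (\<lambda>x a y. indicator U x) = V"
  by (simp add: fun_eq_iff value_fun_def V_def disc_return_def)

lemma summable_disc_return: "summable (\<lambda>t. \<gamma> ^ t * indicator U (fst (\<omega> t)) :: real)"
  by (rule summable_comparison_test[OF _ summable_geometric[of \<gamma>]])
     (use gamma in \<open>auto simp: indicator_def\<close>)

lemma disc_return_nonneg: "0 \<le> disc_return \<omega>"
  unfolding disc_return_def by (rule suminf_nonneg[OF summable_disc_return]) (use gamma in simp)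

lemma disc_return_le: "disc_return \<omega> \<le> 1 / (1 - \<gamma>)"
proof -
  have "disc_return \<omega> \<le> (\<Sum>t. \<gamma> ^ t)"
    unfolding disc_return_def
    by (rule suminf_le[OF _ summable_disc_return summable_geometric])
       (use gamma in \<open>auto simp: indicator_def\<close>)
  also have "\<dots> = 1 / (1 - \<gamma>)" using gamma by (simp add: suminf_geometric)
  finally show ?thesis .
qed

lemma abs_disc_return_le: "\<bar>disc_return \<omega>\<bar> \<le> 1 / (1 - \<gamma>)"
  using disc_return_nonneg[of \<omega>] disc_return_le[of \<omega>] by simp

lemma measurable_disc_return[measurable]: "disc_return \<in> borel_measurable Paths"
  unfolding disc_return_def[abs_def] by measurable

lemma disc_return_unfold:
  "disc_return \<omega> = indicator U (fst (\<omega> 0)) + \<gamma> * disc_return (chain.path_shift \<omega>)"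
proof -
  have "(\<Sum>t. \<gamma> ^ Suc t * indicator U (fst (\<omega> (Suc t))) :: real)
      = disc_return \<omega> - indicator U (fst (\<omega> 0))"
    unfolding disc_return_def by (subst suminf_split_head[OF summable_disc_return]) simp
  moreover have "(\<Sum>t. \<gamma> ^ Suc t * indicator U (fst (\<omega> (Suc t))) :: real)
      = \<gamma> * disc_return (chain.path_shift \<omega>)"
    unfolding disc_return_def chain.path_shift_def
    by (subst suminf_mult[OF summable_disc_return, symmetric]) (simp add: mult.assoc)
  ultimately show ?thesis by simp
qed

lemma measurable_V[measurable]: "V \<in> borel_measurable Mx"
  unfolding V_def[abs_def]
  by (rule measurable_compose[OF measurable_prob_algebraD[OF measurable_Pr]
        integral_measurable_subprob_algebra[OF measurable_disc_return]])

lemma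
  assumes x: "x \<in> space Mx"
  shows V_nonneg: "0 \<le> V x" and V_le: "V x \<le> 1 / (1 - \<gamma>)"
proof -
  interpret prob_space "Pr x" by (rule prob_space_Pr[OF x])
  have "integrable (Pr x) disc_return"
    by (rule integrable_Pr_bounded[OF x measurable_disc_return abs_disc_return_le])
  then show "0 \<le> V x" "V x \<le> 1 / (1 - \<gamma>)"
    unfolding V_def by (auto intro!: integral_ge_const integral_le_const
        simp: disc_return_nonneg disc_return_le)
qed

lemma integrable_V_next: "x \<in> space Mx \<Longrightarrow> integrable (Pr x) (\<lambda>\<omega>. V (fst (\<omega> 1)))"
  by (rule integrable_Pr_bounded[where B="1 / (1 - \<gamma>)"])
     (simp_all add: fst_path_in_space V_nonneg V_le)

theorem V_Bellman:
  assumes x: "x \<in> space Mx"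
  shows "V x = indicator U x + \<gamma> * (\<integral>\<omega>. V (fst (\<omega> 1)) \<partial>Pr x)"
proof -
  have "integrable (Pr x) (\<lambda>\<omega>. indicator U (fst (\<omega> 0)) :: real)"
    by (rule integrable_Pr_bounded[OF x, where B=1]) simp_all
  moreover have "integrable (Pr x) (\<lambda>\<omega>. disc_return (chain.path_shift \<omega>))"
    by (rule integrable_Pr_bounded[OF x, where B="1 / (1 - \<gamma>)"]) (simp_all add: abs_disc_return_le)
  ultimately have "V x = (\<integral>\<omega>. indicator U (fst (\<omega> 0)) \<partial>Pr x)
      + \<gamma> * (\<integral>\<omega>. disc_return (chain.path_shift \<omega>) \<partial>Pr x)"
    unfolding V_def by (subst Bochner_Integration.integral_cong[OF refl disc_return_unfold]) simp_all
  also have "(\<integral>\<omega>. indicator U (fst (\<omega> 0)) \<partial>Pr x) = (indicator U x :: real)"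
    by (rule integral_Pr_initial[OF x]) simp
  also have "(\<integral>\<omega>. disc_return (chain.path_shift \<omega>) \<partial>Pr x) = (\<integral>\<omega>. V (fst (\<omega> 1)) \<partial>Pr x)"
    unfolding V_def by (rule Markov_property[OF x measurable_disc_return abs_disc_return_le])
  finally show ?thesis .
qed

text \<open>The process never leaves S = Abs X \<subseteq> U, so the Bellman equation gives
  inf V(S) \<ge> 1 + \<gamma> inf V(S), i.e. V is maximal on S.\<close>
lemma V_next_on_Abs:
  assumes X: "X \<in> sets Mx" and Abs_U: "Abs Mx Pr X \<subseteq> U" and x: "x \<in> Abs Mx Pr X"
  shows "1 / (1 - \<gamma>) \<le> (\<integral>\<omega>. V (fst (\<omega> 1)) \<partial>Pr x)"
proof -
  let ?S = "Abs Mx Pr X"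
  define m where "m = Inf (V ` ?S)"
  have S_space: "?S \<subseteq> space Mx" by (auto simp: Abs_def)
  have bdd: "bdd_below (V ` ?S)" using V_nonneg S_space by (auto intro!: bdd_belowI[where m=0])
  have next_ge: "m \<le> (\<integral>\<omega>. V (fst (\<omega> 1)) \<partial>Pr y)" if y: "y \<in> ?S" for y
  proof -
    have y_space: "y \<in> space Mx" using y S_space by auto
    interpret prob_space "Pr y" by (rule prob_space_Pr[OF y_space])
    have "AE \<omega> in Pr y. m \<le> V (fst (\<omega> 1))"
      using AE_next_in_Abs[OF X y] by eventually_elim (auto simp: m_def intro!: cInf_lower bdd)
    then show ?thesis by (rule integral_ge_const[OF integrable_V_next[OF y_space]])
  qed
  have "1 + \<gamma> * m \<le> m"
    unfolding m_def
  proof (rule cInf_greatest)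
    show "V ` ?S \<noteq> {}" using x by auto
    fix v assume "v \<in> V ` ?S"
    then obtain y where y: "y \<in> ?S" and v: "v = V y" by auto
    have "y \<in> U" "y \<in> space Mx" using y Abs_U S_space by auto
    then have "V y = 1 + \<gamma> * (\<integral>\<omega>. V (fst (\<omega> 1)) \<partial>Pr y)"
      using V_Bellman by simp
    with next_ge[OF y] gamma v show "1 + \<gamma> * Inf (V ` ?S) \<le> v"
      by (simp add: m_def)
  qed
  then have "1 / (1 - \<gamma>) \<le> m" using gamma by (simp add: field_simps)
  also have "m \<le> (\<integral>\<omega>. V (fst (\<omega> 1)) \<partial>Pr x)" by (rule next_ge[OF x])
  finally show ?thesis .
qed


definition avoid_until :: "nat \<Rightarrow> (nat \<Rightarrow> ('s \<times> 'q) \<times> 'a) set" where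
  "avoid_until N = {\<omega> \<in> space Paths. \<forall>t\<le>N. fst (\<omega> t) \<notin> U}"

lemma avoid_until_in_sets: "avoid_until N \<in> sets Paths"
proof -
  have "Measurable.pred Paths (\<lambda>\<omega>. \<forall>t. t \<le> N \<longrightarrow> fst (\<omega> t) \<notin> U)"
    by (intro pred_intros_countable) measurable
  then show ?thesis unfolding avoid_until_def by (rule predE)
qed

lemma hitting_time_ge_avoid_until:
  "of_nat (Suc N) * indicator (avoid_until N) \<omega> \<le> ennreal_of_enat (hitting_time U \<omega>)"
proof (cases "\<omega> \<in> avoid_until N \<and> (\<exists>t. fst (\<omega> t) \<in> U)")
  case True
  then have "fst (\<omega> (LEAST t. fst (\<omega> t) \<in> U)) \<in> U" by (auto intro: LeastI_ex)
  with True have "Suc N \<le> (LEAST t. fst (\<omega> t) \<in> U)"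
    by (auto simp: avoid_until_def not_less_eq_eq[symmetric])
  then have "(of_nat (Suc N) :: ennreal) \<le> of_nat (LEAST t. fst (\<omega> t) \<in> U)" by (rule of_nat_mono)
  with True show ?thesis by (simp add: hitting_time_def)
qed (auto simp: hitting_time_def)

lemma prob_avoid_until_le:
  assumes x: "x \<in> space Mx"
    and H: "(\<integral>\<^sup>+\<omega>. ennreal_of_enat (hitting_time U \<omega>) \<partial>Pr x) \<le> ennreal H"
    and N: "2 * H \<le> real N"
  shows "measure (Pr x) (avoid_until N) \<le> 1 / 2"
proof -
  interpret prob_space "Pr x" by (rule prob_space_Pr[OF x])
  have sets: "avoid_until N \<in> sets (Pr x)" by (simp add: sets_Pr[OF x] avoid_until_in_sets)
  have "of_nat (Suc N) * emeasure (Pr x) (avoid_until N)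
      = (\<integral>\<^sup>+\<omega>. of_nat (Suc N) * indicator (avoid_until N) \<omega> \<partial>Pr x)"
    by (rule nn_integral_cmult_indicator[OF sets, symmetric])
  also have "\<dots> \<le> ennreal H"
    using nn_integral_mono[OF hitting_time_ge_avoid_until] H by (rule order_trans)
  finally have "ennreal (real (Suc N) * measure (Pr x) (avoid_until N)) \<le> ennreal H"
    by (simp add: emeasure_eq_measure ennreal_of_nat_eq_real_of_nat ennreal_mult)
  then have "real (Suc N) * measure (Pr x) (avoid_until N) \<le> max H 0"
    by (cases "0 \<le> H") (auto simp: ennreal_le_iff2 ennreal_neg)
  also have "\<dots> < real (Suc N) * (1 / 2)" using N by auto
  finally show ?thesis by (subst (asm) mult_less_cancel_left_pos) auto
qed

lemma V_ge_avoid_until: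
  assumes x: "x \<in> space Mx"
  shows "\<gamma> ^ N * (1 - measure (Pr x) (avoid_until N)) \<le> V x"
proof -
  interpret prob_space "Pr x" by (rule prob_space_Pr[OF x])
  have gamma_bounds: "0 \<le> \<gamma>" "\<gamma> \<le> 1" using gamma by auto
  have low: "\<gamma> ^ N * (1 - indicator (avoid_until N) \<omega>) \<le> disc_return \<omega>" if "\<omega> \<in> space Paths" for \<omega>
  proof (cases "\<omega> \<in> avoid_until N")
    case False
    with that obtain t where t: "t \<le> N" "fst (\<omega> t) \<in> U" by (auto simp: avoid_until_def)
    have "\<gamma> ^ N \<le> \<gamma> ^ t" by (rule power_decreasing[OF t(1) gamma_bounds])
    also have "\<gamma> ^ t = (\<Sum>t\<in>{t}. \<gamma> ^ t * indicator U (fst (\<omega> t)))" using t by simp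
    also have "\<dots> \<le> disc_return \<omega>" unfolding disc_return_def
      by (rule sum_le_suminf[OF summable_disc_return]) (use gamma_bounds in auto)
    finally show ?thesis using False by simp
  qed (simp add: disc_return_nonneg)
  have "integrable (Pr x) (\<lambda>\<omega>. \<gamma> ^ N * (1 - indicator (avoid_until N) \<omega>))"
  proof (rule integrable_Pr_bounded[OF x, where B=1])
    show "(\<lambda>\<omega>. \<gamma> ^ N * (1 - indicator (avoid_until N) \<omega>)) \<in> borel_measurable Paths"
      by (intro borel_measurable_times borel_measurable_const borel_measurable_diff
          borel_measurable_indicator avoid_until_in_sets)
    show "\<bar>\<gamma> ^ N * (1 - indicator (avoid_until N) \<omega>)\<bar> \<le> 1" for \<omega>
      using power_le_one[OF gamma_bounds] gamma_bounds by (simp add: indicator_def)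
  qed
  then have "(\<integral>\<omega>. \<gamma> ^ N * (1 - indicator (avoid_until N) \<omega>) \<partial>Pr x) \<le> V x"
    unfolding V_def
    by (rule integral_mono[OF _ integrable_Pr_bounded[OF x measurable_disc_return abs_disc_return_le]])
       (simp add: space_Pr[OF x] low)
  moreover have "(\<integral>\<omega>. 1 - indicator (avoid_until N) \<omega> \<partial>Pr x) = 1 - measure (Pr x) (avoid_until N)"
    using avoid_until_in_sets
    by (simp add: Bochner_Integration.integral_diff emeasure_eq_measure sets_Pr[OF x] prob_space)
  ultimately show ?thesis by simp
qed

lemma V_ge_hitting_time:
  assumes x: "x \<in> space Mx"
    and H: "(\<integral>\<^sup>+\<omega>. ennreal_of_enat (hitting_time U \<omega>) \<partial>Pr x) \<le> ennreal H"
  shows "\<gamma> ^ nat \<lceil>2 * H\<rceil> / 2 \<le> V x"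
proof -
  have "measure (Pr x) (avoid_until (nat \<lceil>2 * H\<rceil>)) \<le> 1 / 2"
    by (rule prob_avoid_until_le[OF x H]) linarith
  then have "\<gamma> ^ nat \<lceil>2 * H\<rceil> / 2 \<le> \<gamma> ^ nat \<lceil>2 * H\<rceil> * (1 - measure (Pr x) (avoid_until (nat \<lceil>2 * H\<rceil>)))"
    using gamma by (simp add: field_simps)
  also have "\<dots> \<le> V x" by (rule V_ge_avoid_until[OF x])
  finally show ?thesis .
qed

lemma integral_gap_next:
  assumes x: "x \<in> space Mx"
  shows "(\<integral>\<omega>. 1 / (1 - \<gamma>) - V (fst (\<omega> 1)) \<partial>Pr x) = 1 / (1 - \<gamma>) - (\<integral>\<omega>. V (fst (\<omega> 1)) \<partial>Pr x)"
proof -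
  interpret prob_space "Pr x" by (rule prob_space_Pr[OF x])
  show ?thesis
    by (subst Bochner_Integration.integral_diff[OF _ integrable_V_next[OF x]]) (simp_all add: prob_space)
qed

lemma integral_gap_next_off_target:
  assumes x: "x \<in> space Mx" and "x \<notin> U"
  shows "(\<integral>\<omega>. 1 / (1 - \<gamma>) - V (fst (\<omega> 1)) \<partial>Pr x) = 1 / (1 - \<gamma>) - V x - (1 - \<gamma>) / \<gamma> * V x"
proof -
  have "V x = \<gamma> * (\<integral>\<omega>. V (fst (\<omega> 1)) \<partial>Pr x)"
    using V_Bellman[OF x] \<open>x \<notin> U\<close> by simp
  then have "(\<integral>\<omega>. V (fst (\<omega> 1)) \<partial>Pr x) = V x / \<gamma>"
    using gamma by (simp add: field_simps)
  then show ?thesis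
    unfolding integral_gap_next[OF x] using gamma by (simp add: field_simps)
qed


lemma integrable_gap_next:
  assumes x: "x \<in> space Mx"
  shows "integrable (Pr x) (\<lambda>\<omega>. 1 / (1 - \<gamma>) - V (fst (\<omega> 1)))"
proof -
  interpret prob_space "Pr x" by (rule prob_space_Pr[OF x])
  show ?thesis using integrable_V_next[OF x] by simp
qed

lemma integral_gap_next_on_Abs:
  assumes X: "X \<in> sets Mx" "Abs Mx Pr X \<subseteq> U" and x: "x \<in> Abs Mx Pr X"
  shows "(\<integral>\<omega>. 1 / (1 - \<gamma>) - V (fst (\<omega> 1)) \<partial>Pr x) \<le> 0"
proof -
  have x_space: "x \<in> space Mx" using x by (simp add: Abs_def)
  then show ?thesis using V_next_on_Abs[OF X x] unfolding integral_gap_next[OF x_space] by simp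
qed

theorem streett_supermartingale_gap:
  assumes sets: "A' \<in> sets Mx" "B' \<in> sets Mx" "I \<in> sets Mx"
    and I_abs: "absorbing Pr I" and I_init: "measure \<nu> I = 1"
    and X: "X \<in> sets Mx" "Abs Mx Pr X \<subseteq> U"
    and off_target: "(A' - B') \<inter> U = {}"
    and in_Abs: "(I - (A' \<union> B')) \<inter> U \<subseteq> Abs Mx Pr X"
    and bounded: "\<exists>H. \<forall>x\<in>(A' - B') \<inter> I.
       (\<integral>\<^sup>+\<omega>. ennreal_of_enat (hitting_time U \<omega>) \<partial>Pr x) \<le> ennreal H"
  shows "streett_supermartingale Mx Pr \<nu> A' B' I (\<lambda>x. 1 / (1 - \<gamma>) - V x)"
proof -
  have I_space: "I \<subseteq> space Mx" using sets(3) by (rule sets.sets_into_space)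
  obtain H where H: "\<forall>x\<in>(A' - B') \<inter> I.
      (\<integral>\<^sup>+\<omega>. ennreal_of_enat (hitting_time U \<omega>) \<partial>Pr x) \<le> ennreal H"
    using bounded by blast
  define \<epsilon> where "\<epsilon> = (1 - \<gamma>) / \<gamma> * (\<gamma> ^ nat \<lceil>2 * H\<rceil> / 2)"
  have "0 < \<epsilon>" using gamma by (simp add: \<epsilon>_def)
  moreover have "(\<integral>\<omega>. 1 / (1 - \<gamma>) - V (fst (\<omega> 1)) \<partial>Pr x) \<le> 1 / (1 - \<gamma>) - V x - \<epsilon>"
    if x: "x \<in> (A' - B') \<inter> I" for x
  proof -
    have x_space: "x \<in> space Mx" and "x \<notin> U" using x I_space off_target by auto
    have "\<gamma> ^ nat \<lceil>2 * H\<rceil> / 2 \<le> V x" using H x by (intro V_ge_hitting_time[OF x_space]) auto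
    then have "\<epsilon> \<le> (1 - \<gamma>) / \<gamma> * V x" unfolding \<epsilon>_def using gamma by (intro mult_left_mono) auto
    then show ?thesis unfolding integral_gap_next_off_target[OF x_space \<open>x \<notin> U\<close>] by simp
  qed
  moreover have "(\<integral>\<omega>. 1 / (1 - \<gamma>) - V (fst (\<omega> 1)) \<partial>Pr x) \<le> 1 / (1 - \<gamma>) - V x"
    if x: "x \<in> I - (A' \<union> B')" for x
  proof (cases "x \<in> U")
    case True
    with x in_Abs have "x \<in> Abs Mx Pr X" by auto
    then have "(\<integral>\<omega>. 1 / (1 - \<gamma>) - V (fst (\<omega> 1)) \<partial>Pr x) \<le> 0"
      by (rule integral_gap_next_on_Abs[OF X])
    moreover have "V x \<le> 1 / (1 - \<gamma>)" using x I_space by (intro V_le) auto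
    ultimately show ?thesis by linarith
  next
    case False
    have "0 \<le> V x" using x I_space by (intro V_nonneg) auto
    then have "0 \<le> (1 - \<gamma>) / \<gamma> * V x" using gamma by simp
    with x I_space False show ?thesis by (subst integral_gap_next_off_target) auto
  qed
  ultimately show ?thesis
    using sets I_init I_abs I_space V_le integrable_gap_next
    unfolding streett_supermartingale_def absorbing_def by (auto 0 3)
qed

end

theorem corollary1:
  fixes Ms :: "'s measure" and Ma :: "'a measure"
    and P :: "'s \<Rightarrow> 'a \<Rightarrow> 's measure" and \<mu> :: "'s measure"
    and AP :: "'ap set" and L :: "'s \<Rightarrow> 'ap set"
    and Q :: "'q set" and \<delta> :: "'q \<Rightarrow> 'ap set \<Rightarrow> 'q" and q0 :: 'q
    and Acc :: "('q set \<times> 'q set) set"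
    and \<pi> :: "'s \<times> 'q \<Rightarrow> 'a measure"
    and \<gamma> :: real and A B :: "'q set" and I :: "('s \<times> 'q) set"
    and r :: "'s \<times> 'q \<Rightarrow> 'a \<Rightarrow> 's \<times> 'q \<Rightarrow> real"
  defines "Mx \<equiv> prod_space Ms Q"
    and "Pr \<equiv> path_measure (prod_space Ms Q) Ma (prod_kernel Ms Q P L \<delta>) \<pi>"
    and "U \<equiv> (space Ms \<times> B) \<union>
      Abs (prod_space Ms Q) (path_measure (prod_space Ms Q) Ma (prod_kernel Ms Q P L \<delta>) \<pi>)
        (space (prod_space Ms Q) - space Ms \<times> (A \<union> B))"
  assumes \<comment> \<open>labelled MDP\<close>
    P_kernel: "(\<lambda>(s, a). P s a) \<in> Ms \<Otimes>\<^sub>M Ma \<rightarrow>\<^sub>M prob_algebra Ms"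
    and mu: "prob_space \<mu>" "sets \<mu> = sets Ms"
    and AP: "finite AP"
    and L: "L \<in> Ms \<rightarrow>\<^sub>M count_space UNIV" "\<And>s. s \<in> space Ms \<Longrightarrow> L s \<subseteq> AP"
    \<comment> \<open>deterministic Streett automaton\<close>
    and Q: "finite Q" "q0 \<in> Q"
    and delta: "\<And>q \<sigma>. q \<in> Q \<Longrightarrow> \<sigma> \<subseteq> AP \<Longrightarrow> \<delta> q \<sigma> \<in> Q"
    and Acc: "finite Acc" "\<And>A' B'. (A', B') \<in> Acc \<Longrightarrow> A' \<subseteq> Q \<and> B' \<subseteq> Q"
    \<comment> \<open>stationary policy on the product\<close>
    and pol: "\<pi> \<in> Mx \<rightarrow>\<^sub>M prob_algebra Ma"
    and gamma: "0 < \<gamma>" "\<gamma> < 1"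
    and AB: "(A, B) \<in> Acc"
    and I_meas: "I \<in> sets Mx"
    \<comment> \<open>(1)\<close>
    and I_abs: "absorbing Pr I"
    and I_init: "measure (prod_init Ms \<mu> Q q0) I = 1"
    \<comment> \<open>(2)\<close>
    and reach: "\<And>x. x \<in> I \<Longrightarrow>
       measure (Pr x) {\<omega> \<in> space (Pr x). hitting_time U \<omega> < \<infinity>} = 1"
    \<comment> \<open>(3)\<close>
    and bounded: "\<exists>H::real. \<forall>x \<in> ((space Ms \<times> A) - (space Ms \<times> B)) \<inter> I.
       (\<integral>\<^sup>+\<omega>. ennreal_of_enat (hitting_time U \<omega>) \<partial>Pr x) \<le> ennreal H"
    \<comment> \<open>(4)\<close>
    and reward: "\<And>x a y. r x a y = indicator U x"
  shows "streett_supermartingale Mx Pr (prod_init Ms \<mu> Q q0) (space Ms \<times> A) (space Ms \<times> B) I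
           (\<lambda>x. 1 / (1 - \<gamma>) - value_fun Pr \<gamma> r x)"
proof -
  interpret mdp: product_mdp Ms Ma P AP L Q \<delta> \<pi>
    using P_kernel AP L delta pol by unfold_locales (simp_all add: Mx_def)
  have Pr_eq: "Pr = mdp.Pr" by (simp add: Pr_def mdp.Pr_def)
  define X where "X = space Mx - space Ms \<times> (A \<union> B)"
  have "A \<subseteq> Q" "B \<subseteq> Q" using Acc(2)[OF AB] by auto
  then have SA: "space Ms \<times> A \<in> sets Mx" and SB: "space Ms \<times> B \<in> sets Mx"
    and "space Ms \<times> (A \<union> B) \<in> sets Mx"
    unfolding Mx_def prod_space_def by (auto intro!: pair_measureI)
  then have X: "X \<in> sets Mx" unfolding X_def by auto
  have U_eq: "U = space Ms \<times> B \<union> Abs Mx Pr X" by (simp add: U_def X_def Mx_def Pr_def)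
  interpret val: discounted_reach Ms Ma P AP L Q \<delta> \<pi> \<gamma> U
    using gamma SB mdp.Abs_in_sets[OF X[unfolded Mx_def]]
    by unfold_locales (auto simp: U_eq Mx_def Pr_eq)
  have "Abs Mx Pr X \<subseteq> X" using mdp.Abs_subset X by (simp add: Mx_def Pr_eq)
  then have "streett_supermartingale Mx Pr (prod_init Ms \<mu> Q q0) (space Ms \<times> A) (space Ms \<times> B) I
      (\<lambda>x. 1 / (1 - \<gamma>) - val.V x)"
    unfolding Mx_def Pr_eq
    by (intro val.streett_supermartingale_gap[where X = X])
       (use SA SB I_meas I_abs I_init X bounded in \<open>auto simp: U_eq X_def Mx_def Pr_eq\<close>)
  moreover have "value_fun Pr \<gamma> r = val.V"
    using val.value_fun_indicator by (simp add: Pr_eq reward[abs_def])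
  ultimately show ?thesis by simp
qed

end
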